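(* Let $t,r\in\mathbb{R}$ with $r>e^{-t}$. For all integers $n\ge\lceil r\rceil$, $$\int_{n+1}^\infty\frac{dx}{24x^2(t+\log x)^2}+\frac{1}{24(n+1)(t+\log(n+1))^2}\le\beta(t,r)-\beta_n(t,r)$$ $$\le\int_n^\infty\frac{dx}{24x^2(t+\log x)^2}+\frac{1}{24(n+\frac12)(t+\log(n+\frac12))^2}+\frac{1}{24n^2(t+\log n)^2}+\frac{1}{12n^2(t+\log n)^3}.$$ Moreover, $\beta(t,r)=\beta_n(t,r)+\frac{1+o(1)}{12n(\log n)^2}$ as $n\to\infty$.
   Context: $\operatorname{li}(x)=\int_0^x\frac{du}{\log u}$ (principal value) is the logarithmic integral, $\gamma$ the Euler–Mascheroni constant, $H_k=\sum_{j=1}^k1/j$. For real $t,r$ with $\lceil r\rceil>e^{-t}$ and real $x\ge r$, define $\beta_x(t,r)=\frac{\operatorname{li}(e^tx)}{e^t}-\sum_{r\le k<x}\frac{1}{H_k-\gamma+t}$ (sum over integers $k$), and $\beta(t,r)=\lim_{n\to\infty}\beta_n(t,r)$ (this limit exists). *)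

theory Defs
  imports "HOL-Analysis.Analysis" "HOL-Library.Landau_Symbols"
begin

text \<open>Logarithmic integral as a Cauchy principal value (meaningful for x > 1).\<close>
definition li :: "real \<Rightarrow> real" where
  "li x = Lim (at_right 0)
     (\<lambda>\<epsilon>. integral {0..1 - \<epsilon>} (\<lambda>u. 1 / ln u) + integral {1 + \<epsilon>..x} (\<lambda>u. 1 / ln u))"

text \<open>beta_x(t,r); the sum ranges over the integers k with r \<le> k < x
  (in the relevant range r > 0, so these are positive integers).\<close>
definition beta_x :: "real \<Rightarrow> real \<Rightarrow> real \<Rightarrow> real" where
  "beta_x x t r = li (exp t * x) / exp t
     - (\<Sum>k\<in>{k::int. r \<le> real_of_int k \<and> real_of_int k < x}.
          1 / (harm (nat k) - euler_mascheroni + t))"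

definition beta :: "real \<Rightarrow> real \<Rightarrow> real" where
  "beta t r = lim (\<lambda>n::nat. beta_x (real n) t r)"

end

theory Submission
  imports Defs "HOL-Real_Asymp.Real_Asymp"
begin

(*
  For k >= ceiling r the increment beta_x (k + 1) - beta_x k is
    a_k = integral_k^(k+1) f - 1 / (H_k - gamma + t),   f x = 1 / L x,   L x = t + ln x,
  and beta - beta_x n = sum_(k >= n) a_k.  The midpoint rule gives
  integral_k^(k+1) f = f (k + 1/2) + f''(xi) / 24, where f'' = g + 2 / (x^2 L^3) with
  g = 1 / (x^2 L^2) is decreasing, and the refined Euler-Mascheroni estimate
    1 / (24 (k + 1)^2) <= H_k - gamma - ln (k + 1/2) <= 1 / (24 (k + 1/2)^2)
  gives 1 / (H_k - gamma + t) = f (k + 1/2) - g(xi') / 24.  Hence 24 a_k lies between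
  f''(k + 1) + g(k + 1) and f''(k) + g(k + 1/2).  Summing, the f''-terms telescope because
  f'' = - G' for G = 1 / (x L^2), and the g-terms are compared with integral g: from below by
  monotonicity, from above at the midpoints by convexity.  Finally g <= f'' <= (1 + 2 / L a) g
  on [a, oo) shows that integral_a^oo g ~ G a ~ 1 / (a (ln a)^2).
*)

section \<open>Calculus on the real line\<close>

lemma nonneg_if_deriv_nonpos_tendsto_0:
  fixes F F' :: "real \<Rightarrow> real"
  assumes deriv: "\<And>x. x \<ge> a \<Longrightarrow> (F has_real_derivative F' x) (at x)"
    and nonpos: "\<And>x. x \<ge> a \<Longrightarrow> F' x \<le> 0"
    and lim: "(F \<longlongrightarrow> 0) at_top" and x: "x \<ge> a"
  shows "F x \<ge> 0"
proof -
  have "\<forall>\<^sub>F y in at_top. F y \<le> F x"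
    using eventually_ge_at_top[of x]
  proof eventually_elim
    case (elim y)
    show ?case
    proof (rule DERIV_nonpos_imp_nonincreasing[OF elim])
      fix z assume "x \<le> z"
      then show "\<exists>y. (F has_real_derivative y) (at z) \<and> y \<le> 0"
        using x deriv nonpos by (meson order_trans)
    qed
  qed
  then show ?thesis using tendsto_upperbound[OF lim] by simp
qed

lemma integrable_on_if_has_real_derivative:
  fixes f f' :: "real \<Rightarrow> real"
  assumes "\<And>x. x \<in> {a..b} \<Longrightarrow> (f has_real_derivative f' x) (at x)"
  shows "f integrable_on {a..b}"
  using assms by (intro integrable_continuous_real DERIV_atLeastAtMost_imp_continuous_on) auto

lemma integral_eq_sum_unit_intervals:
  fixes f :: "real \<Rightarrow> real"
  assumes "f integrable_on {a..a + real j}"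
  shows "integral {a..a + real j} f = (\<Sum>i<j. integral {a + real i..a + real i + 1} f)"
  using assms
proof (induction j)
  case (Suc j)
  have int: "f integrable_on {a..a + real j + 1}" using Suc.prems by (simp add: algebra_simps)
  have "integral {a..a + real j} f + integral {a + real j..a + real j + 1} f
      = integral {a..a + real j + 1} f"
    by (rule Henstock_Kurzweil_Integration.integral_combine) (use int in auto)
  moreover have "f integrable_on {a..a + real j}"
    by (rule integrable_on_subinterval[OF int]) auto
  ultimately show ?case using Suc.IH by (simp add: algebra_simps)
qed simp

lemma midpoint_le_integral_convex:
  fixes f :: "real \<Rightarrow> real"
  assumes "a \<le> b" and convex: "convex_on {a..b} f" and int: "f integrable_on {a..b}"
    and deriv: "(f has_real_derivative f') (at ((a + b) / 2))"
  shows "(b - a) * f ((a + b) / 2) \<le> integral {a..b} f"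
proof (cases "a = b")
  case False
  define m where "m = (a + b) / 2"
  have m: "m \<in> interior {a..b}" using \<open>a \<le> b\<close> False by (auto simp: m_def)
  have tangent: "f m + f' * (x - m) \<le> f x" if "x \<in> {a..b}" for x
    using convex_on_imp_above_tangent[OF convex connected_Icc m that
        has_field_derivative_at_within[OF deriv[folded m_def]]] by simp
  have "((\<lambda>x. f m + f' * (x - m)) has_integral (b - a) * f m) {a..b}"
  proof -
    have "((\<lambda>x. f m + f' * (x - m)) has_integral
            ((f m * b + f' * (b - m)^2 / 2) - (f m * a + f' * (a - m)^2 / 2))) {a..b}"
      by (intro fundamental_theorem_of_calculus \<open>a \<le> b\<close>)
         (auto intro!: derivative_eq_intros simp flip: has_real_derivative_iff_has_vector_derivative)
    moreover have "(f m * b + f' * (b - m)^2 / 2) - (f m * a + f' * (a - m)^2 / 2) = (b - a) * f m"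
      by (simp add: m_def power2_eq_square algebra_simps)
    ultimately show ?thesis by simp
  qed
  then show ?thesis
    using has_integral_le[OF _ integrable_integral[OF int] tangent] by (simp add: m_def)
qed simp

lemma has_integral_square_centered:
  fixes a b :: real
  assumes "a \<le> b"
  shows "((\<lambda>x. (x - (a + b) / 2)^2) has_integral (b - a)^3 / 12) {a..b}"
proof -
  define m where "m = (a + b) / 2"
  have ftc: "((\<lambda>x. (x - m)^2) has_integral (b - m)^3 / 3 - (a - m)^3 / 3) {a..b}"
  proof (intro fundamental_theorem_of_calculus assms)
    fix x assume "x \<in> {a..b}"
    have "((\<lambda>x. (x - m)^3 / 3) has_real_derivative (x - m)^2) (at x)"
      by (rule derivative_eq_intros refl | simp)+
    then show "((\<lambda>x. (x - m)^3 / 3) has_vector_derivative (x - m)^2) (at x within {a..b})"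
      by (simp add: has_real_derivative_iff_has_vector_derivative has_vector_derivative_at_within)
  qed
  have cube_diff: "(b - m)^3 / 3 - (a - m)^3 / 3 = (b - a)^3 / 12"
  proof -
    have e: "b - m = (b - a) / 2" "a - m = - ((b - a) / 2)" by (simp_all add: m_def field_simps)
    show ?thesis unfolding e by (simp add: power3_eq_cube field_simps)
  qed
  show ?thesis using ftc[unfolded cube_diff] unfolding m_def .
qed

lemma midpoint_rule_lower_bound:
  fixes f f' f'' :: "real \<Rightarrow> real"
  assumes "a \<le> b"
    and f': "\<And>x. x \<in> {a..b} \<Longrightarrow> (f has_real_derivative f' x) (at x)"
    and f'': "\<And>x. x \<in> {a..b} \<Longrightarrow> (f' has_real_derivative f'' x) (at x)"
    and lower: "\<And>x. x \<in> {a..b} \<Longrightarrow> c \<le> f'' x"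
  shows "(b - a) * f ((a + b) / 2) + c * (b - a)^3 / 24 \<le> integral {a..b} f"
proof -
  define m where "m = (a + b) / 2"
  define g where "g = (\<lambda>x. f x - c * (x - m)^2 / 2)"
  have g': "(g has_real_derivative f' x - c * (x - m)) (at x)" if "x \<in> {a..b}" for x
    unfolding g_def using f'[OF that] by (auto intro!: derivative_eq_intros)
  have g'': "((\<lambda>x. f' x - c * (x - m)) has_real_derivative f'' x - c) (at x)" if "x \<in> {a..b}" for x
    using f''[OF that] by (auto intro!: derivative_eq_intros)
  have f_int: "f integrable_on {a..b}"
    using f' by (rule integrable_on_if_has_real_derivative)
  have square: "((\<lambda>x. c * (x - m)^2 / 2) has_integral c * (b - a)^3 / 24) {a..b}"
    using has_integral_mult_right[OF has_integral_square_centered[OF \<open>a \<le> b\<close>], of "c / 2"]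
    by (simp add: m_def)
  have g_int: "(g has_integral integral {a..b} f - c * (b - a)^3 / 24) {a..b}"
    unfolding g_def by (intro has_integral_diff integrable_integral f_int square)
  have "convex_on {a..b} g"
    by (rule f''_ge0_imp_convex[OF convex_real_interval(5) g' g'']) (use lower in auto)
  moreover have "(g has_real_derivative f' m) (at ((a + b) / 2))"
    using g'[of m] \<open>a \<le> b\<close> by (simp add: m_def)
  ultimately have "(b - a) * g m \<le> integral {a..b} g"
    using midpoint_le_integral_convex[OF \<open>a \<le> b\<close>] g_int by (auto simp: m_def)
  then show ?thesis using g_int by (simp add: g_def m_def integral_unique)
qed

lemma midpoint_rule_upper_bound:
  fixes f f' f'' :: "real \<Rightarrow> real"
  assumes "a \<le> b"
    and f': "\<And>x. x \<in> {a..b} \<Longrightarrow> (f has_real_derivative f' x) (at x)"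
    and f'': "\<And>x. x \<in> {a..b} \<Longrightarrow> (f' has_real_derivative f'' x) (at x)"
    and upper: "\<And>x. x \<in> {a..b} \<Longrightarrow> f'' x \<le> C"
  shows "integral {a..b} f \<le> (b - a) * f ((a + b) / 2) + C * (b - a)^3 / 24"
proof -
  have "(b - a) * - f ((a + b) / 2) + - C * (b - a)^3 / 24 \<le> integral {a..b} (\<lambda>x. - f x)"
    by (rule midpoint_rule_lower_bound[where f' = "\<lambda>x. - f' x" and f'' = "\<lambda>x. - f'' x"])
       (use assms in \<open>auto intro: DERIV_minus\<close>)
  then show ?thesis by (simp add: integral_neg)
qed

lemma integral_le_sum_antimono:
  fixes f :: "real \<Rightarrow> real"
  assumes int: "f integrable_on {a..a + real j}"
    and antimono: "\<And>x y. a \<le> x \<Longrightarrow> x \<le> y \<Longrightarrow> y \<le> a + real j \<Longrightarrow> f y \<le> f x"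
  shows "integral {a..a + real j} f \<le> (\<Sum>i<j. f (a + real i))"
proof -
  have "integral {a + real i..a + real i + 1} f \<le> f (a + real i)" if "i < j" for i
  proof -
    have "integral {a + real i..a + real i + 1} f
        \<le> integral {a + real i..a + real i + 1} (\<lambda>_. f (a + real i))"
      by (rule integral_le[OF integrable_on_subinterval[OF int]]) (use that antimono in auto)
    then show ?thesis by simp
  qed
  then show ?thesis unfolding integral_eq_sum_unit_intervals[OF int] by (intro sum_mono) auto
qed

lemma sum_midpoints_le_integral_convex:
  fixes f :: "real \<Rightarrow> real"
  assumes convex: "convex_on {a..a + real j} f"
    and diff: "\<And>x. x \<in> {a..a + real j} \<Longrightarrow> f differentiable (at x)"
  shows "(\<Sum>i<j. f (a + real i + 1/2)) \<le> integral {a..a + real j} f"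
proof -
  have int: "f integrable_on {a..a + real j}"
    by (intro integrable_continuous_real continuous_at_imp_continuous_on ballI
        differentiable_imp_continuous_within diff)
  have "f (a + real i + 1/2) \<le> integral {a + real i..a + real i + 1} f" if "i < j" for i
  proof -
    have sub: "{a + real i..a + real i + 1} \<subseteq> {a..a + real j}" using that by auto
    have mid: "(a + real i + (a + real i + 1)) / 2 = a + real i + 1/2" by simp
    have "f differentiable (at ((a + real i + (a + real i + 1)) / 2))"
      unfolding mid using that by (intro diff) auto
    then obtain f' where "(f has_real_derivative f') (at ((a + real i + (a + real i + 1)) / 2))"
      by (auto simp: real_differentiable_def)
    from midpoint_le_integral_convex[OF _ convex_on_subset[OF convex sub convex_real_interval(5)]
        integrable_on_subinterval[OF int sub] this]
    show ?thesis unfolding mid by simp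
  qed
  then show ?thesis unfolding integral_eq_sum_unit_intervals[OF int] by (intro sum_mono) auto
qed

lemma integral_atLeastAtMost_tendsto_integral_atLeast:
  fixes f :: "real \<Rightarrow> real"
  assumes int: "f integrable_on {a..}" and nonneg: "\<And>x. x \<ge> a \<Longrightarrow> f x \<ge> 0"
  shows "(\<lambda>N. integral {a..a + real N} f) \<longlonglongrightarrow> integral {a..} f"
proof -
  define g where "g = (\<lambda>N::nat. \<lambda>x. if x \<in> {a..a + real N} then f x else 0)"
  have restrict: "{a..a + real N} \<inter> {a..} = {a..a + real N}" for N by auto
  have "(\<lambda>N. integral {a..} (g N)) \<longlonglongrightarrow> integral {a..} f"
  proof (rule dominated_convergence(2)[OF _ int])
    show "g N integrable_on {a..}" for N
      unfolding g_def integrable_restrict_Int restrict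
      by (rule integrable_on_subinterval[OF int]) auto
    show "norm (g N x) \<le> f x" if "x \<in> {a..}" for N x
      using nonneg that by (auto simp: g_def)
    show "(\<lambda>N. g N x) \<longlonglongrightarrow> f x" if "x \<in> {a..}" for x
    proof (rule tendsto_eventually)
      obtain M :: nat where "x - a \<le> real M" using real_arch_simple by blast
      then show "\<forall>\<^sub>F N in sequentially. g N x = f x"
        using that unfolding g_def eventually_sequentially by (intro exI[of _ M]) auto
    qed
  qed
  then show ?thesis unfolding g_def integral_restrict_Int restrict .
qed

section \<open>Harmonic numbers\<close>

lemma has_real_derivative_power_shift_inverse:
  fixes x a c :: real
  assumes "x \<noteq> a"
  shows "((\<lambda>x. c / (x - a)^n) has_real_derivative - c * real n / (x - a)^Suc n) (at x)"
proof -
  have "((\<lambda>x. c * inverse ((x - a)^n)) has_real_derivative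
          c * (- (real n * (x - a)^(n - 1)) / ((x - a)^n)^2)) (at x)"
    using assms by (auto intro!: derivative_eq_intros simp: divide_inverse power2_eq_square)
  moreover have "c * (- (real n * (x - a)^(n - 1)) / ((x - a)^n)^2) = - c * real n / (x - a)^Suc n"
  proof (cases n)
    case (Suc m)
    define y where "y = x - a"
    have "y \<noteq> 0" using assms by (simp add: y_def)
    moreover have "((x - a)^n)^2 = y^m * y^Suc n" "(x - a)^(n - 1) = y^m" "(x - a)^Suc n = y^Suc n"
      by (simp_all add: y_def Suc power2_eq_square flip: power_add)
    ultimately show ?thesis by (simp add: divide_simps del: power_Suc)
  qed simp
  moreover have "(\<lambda>x. c * inverse ((x - a)^n)) = (\<lambda>x. c / (x - a)^n)"
    by (simp add: divide_inverse)
  ultimately show ?thesis by simp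
qed

lemma ln_midpoint_step_upper_deriv_sign:
  fixes y :: real
  assumes "y \<ge> 1"
  shows "1 / (y - 1/2) - 1 / (y + 1/2) - 1 / y^2 \<le> (1/12) / (y - 1/2)^3 - (1/12) / (y + 1/2)^3"
proof -
  have "y^2 \<ge> 1" using assms by (simp add: one_le_power)
  with assms have p: "y - 1/2 > 0" "y + 1/2 > 0" "y > 0" "y^2 - 1/4 > 0" by linarith+
  define P where "P = y^2 - 1/4"
  have "1 / (y - 1/2) - 1 / (y + 1/2) - 1 / y^2 = 1 / (4 * y^2 * P)"
    using p by (simp add: P_def field_simps power2_eq_square)
  also have "\<dots> \<le> (3 * y^2 + 1/4) / (12 * P^3)"
  proof -
    have "3 * P^2 \<le> y^2 * (3 * y^2 + 1/4)"
      using p by (simp add: P_def power2_eq_square algebra_simps)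
    then have "12 * P^3 \<le> (4 * y^2 * P) * (3 * y^2 + 1/4)"
      using p by (simp add: P_def power2_eq_square power3_eq_cube)
    then show ?thesis using p by (simp add: P_def divide_simps) (simp add: algebra_simps)
  qed
  also have "\<dots> = (1/12) / (y - 1/2)^3 - (1/12) / (y + 1/2)^3"
  proof -
    define a b where "a = y - 1/2" and "b = y + 1/2"
    have "a > 0" "b > 0" using p by (simp_all add: a_def b_def)
    then have "(1/12) / a^3 - (1/12) / b^3 = (b^3 - a^3) / (12 * (a * b)^3)"
      by (simp add: field_simps power_mult_distrib)
    also have "b^3 - a^3 = 3 * y^2 + 1/4"
      by (simp add: a_def b_def power2_eq_square power3_eq_cube algebra_simps)
    also have "a * b = P" by (simp add: a_def b_def P_def power2_eq_square algebra_simps)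
    finally show ?thesis by (simp add: a_def b_def)
  qed
  finally show ?thesis .
qed

lemma ln_midpoint_step_upper:
  fixes x :: real
  assumes "x \<ge> 1"
  shows "ln (x + 1/2) - ln (x - 1/2) - 1/x \<le> (1/24) / (x - 1/2)^2 - (1/24) / (x + 1/2)^2"
proof -
  define F where "F = (\<lambda>x::real. (1/24) / (x - 1/2)^2 - (1/24) / (x + 1/2)^2
                                 - ln (x + 1/2) + ln (x - 1/2) + 1/x)"
  define F' where "F' = (\<lambda>y::real. - (1/12) / (y - 1/2)^3 - - (1/12) / (y + 1/2)^3
                                   - 1 / (y + 1/2) + 1 / (y - 1/2) + - 1 / y^2)"
  have "(F has_real_derivative F' y) (at y) \<and> F' y \<le> 0" if "1 \<le> y" for y
  proof
    have p: "y - 1/2 > 0" "y + 1/2 > 0" "y > 0" using that by linarith+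
    have "((\<lambda>x. 1/x) has_real_derivative - 1 / y^2) (at y)"
      and "((\<lambda>x. ln (x + 1/2)) has_real_derivative 1 / (y + 1/2)) (at y)"
      and "((\<lambda>x. ln (x - 1/2)) has_real_derivative 1 / (y - 1/2)) (at y)"
      using p by (auto intro!: derivative_eq_intros simp: power2_eq_square)
    moreover have "((\<lambda>x. (1/24) / (x - 1/2)^2) has_real_derivative - (1/12) / (y - 1/2)^3) (at y)"
      and "((\<lambda>x. (1/24) / (x + 1/2)^2) has_real_derivative - (1/12) / (y + 1/2)^3) (at y)"
      using has_real_derivative_power_shift_inverse[of y "1/2" "1/24" 2]
        has_real_derivative_power_shift_inverse[of y "-1/2" "1/24" 2] p by simp_all
    ultimately show "(F has_real_derivative F' y) (at y)"
      unfolding F_def F'_def by (intro DERIV_add DERIV_diff) auto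
    show "F' y \<le> 0" using ln_midpoint_step_upper_deriv_sign[OF that] by (simp add: F'_def)
  qed
  moreover have "(F \<longlongrightarrow> 0) at_top" unfolding F_def by real_asymp
  ultimately have "F x \<ge> 0" using nonneg_if_deriv_nonpos_tendsto_0[of 1 F F'] assms by blast
  then show ?thesis by (simp add: F_def)
qed

lemma ln_midpoint_step_lower_deriv_sign:
  fixes y :: real
  assumes "y \<ge> 1"
  shows "(1/12) / y^3 - (1/12) / (y + 1)^3 \<le> 1 / (y - 1/2) - 1 / (y + 1/2) - 1 / y^2"
proof -
  have "y^2 \<ge> 1" using assms by (simp add: one_le_power)
  with assms have p: "y - 1/2 > 0" "y + 1/2 > 0" "y > 0" "y^2 - 1/4 > 0" by linarith+
  define P where "P = y^2 - 1/4"
  have "(1/12) / y^3 - (1/12) / (y + 1)^3 = (3 * y^2 + 3 * y + 1) / (12 * y^3 * (y + 1)^3)"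
  proof -
    define b where "b = y + 1"
    have "b > 0" using p by (simp add: b_def)
    then have "(1/12) / y^3 - (1/12) / b^3 = (b^3 - y^3) / (12 * y^3 * b^3)"
      using p by (simp add: field_simps)
    also have "b^3 - y^3 = 3 * y^2 + 3 * y + 1"
      by (simp add: b_def power2_eq_square power3_eq_cube algebra_simps)
    finally show ?thesis by (simp add: b_def)
  qed
  also have "\<dots> \<le> 1 / (4 * y^2 * P)"
  proof -
    have "3 * y * (y + 1)^3 - P * (3 * y^2 + 3 * y + 1) = 6 * y^3 + 35/4 * y^2 + 15/4 * y + 1/4"
      by (simp add: P_def power2_eq_square power3_eq_cube algebra_simps)
    moreover have "y^3 \<ge> 0" "y^2 \<ge> 0" using p by auto
    ultimately have "P * (3 * y^2 + 3 * y + 1) \<le> 3 * y * (y + 1)^3" using p by linarith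
    then have "(4 * y^2 * P) * (3 * y^2 + 3 * y + 1) \<le> 12 * y^3 * (y + 1)^3"
      using p by (simp add: power2_eq_square power3_eq_cube)
    then show ?thesis using p by (simp add: P_def divide_simps) (simp add: algebra_simps)
  qed
  also have "\<dots> = 1 / (y - 1/2) - 1 / (y + 1/2) - 1 / y^2"
    using p by (simp add: P_def field_simps power2_eq_square)
  finally show ?thesis .
qed

lemma ln_midpoint_step_lower:
  fixes x :: real
  assumes "x \<ge> 1"
  shows "(1/24) / x^2 - (1/24) / (x + 1)^2 \<le> ln (x + 1/2) - ln (x - 1/2) - 1/x"
proof -
  define F where "F = (\<lambda>x::real. ln (x + 1/2) - ln (x - 1/2) - 1/x
                                 - (1/24) / x^2 + (1/24) / (x + 1)^2)"
  define F' where "F' = (\<lambda>y::real. 1 / (y + 1/2) - 1 / (y - 1/2) - - 1 / y^2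
                                   - - (1/12) / y^3 + - (1/12) / (y + 1)^3)"
  have "(F has_real_derivative F' y) (at y) \<and> F' y \<le> 0" if "1 \<le> y" for y
  proof
    have p: "y - 1/2 > 0" "y + 1/2 > 0" "y > 0" using that by linarith+
    have "((\<lambda>x. 1/x) has_real_derivative - 1 / y^2) (at y)"
      and "((\<lambda>x. ln (x + 1/2)) has_real_derivative 1 / (y + 1/2)) (at y)"
      and "((\<lambda>x. ln (x - 1/2)) has_real_derivative 1 / (y - 1/2)) (at y)"
      using p by (auto intro!: derivative_eq_intros simp: power2_eq_square)
    moreover have "((\<lambda>x. (1/24) / x^2) has_real_derivative - (1/12) / y^3) (at y)"
      and "((\<lambda>x. (1/24) / (x + 1)^2) has_real_derivative - (1/12) / (y + 1)^3) (at y)"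
      using has_real_derivative_power_shift_inverse[of y 0 "1/24" 2]
        has_real_derivative_power_shift_inverse[of y "-1" "1/24" 2] p by simp_all
    ultimately show "(F has_real_derivative F' y) (at y)"
      unfolding F_def F'_def by (intro DERIV_add DERIV_diff) auto
    show "F' y \<le> 0" using ln_midpoint_step_lower_deriv_sign[OF that] by (simp add: F'_def)
  qed
  moreover have "(F \<longlongrightarrow> 0) at_top" unfolding F_def by real_asymp
  ultimately have "F x \<ge> 0" using nonneg_if_deriv_nonpos_tendsto_0[of 1 F F'] assms by blast
  then show ?thesis by (simp add: F_def)
qed

lemma harm_minus_ln_half_tendsto_euler_mascheroni:
  "(\<lambda>k. harm k - ln (real k + 1/2)) \<longlonglongrightarrow> (euler_mascheroni :: real)"
proof -
  have "(\<lambda>k. ln (real k) - ln (real k + 1/2)) \<longlonglongrightarrow> 0" by real_asymp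
  from tendsto_add[OF euler_mascheroni_LIMSEQ this] show ?thesis by simp
qed

lemma harm_Suc_real: "harm (Suc k) = harm k + 1 / (real k + 1)"
  by (simp add: harm_Suc divide_inverse add.commute)

lemma harm_minus_euler_mascheroni_upper:
  "harm k - euler_mascheroni - ln (real k + 1/2) \<le> (1/24) / (real k + 1/2)^2"
proof -
  define s where "s = (\<lambda>k. harm k - euler_mascheroni - ln (real k + 1/2) - (1/24) / (real k + 1/2)^2 :: real)"
  have "incseq s"
  proof (rule incseq_SucI)
    fix k
    have "ln ((real k + 1) + 1/2) - ln ((real k + 1) - 1/2) - 1 / (real k + 1)
       \<le> (1/24) / ((real k + 1) - 1/2)^2 - (1/24) / ((real k + 1) + 1/2)^2"
      by (rule ln_midpoint_step_upper) simp
    moreover have "(real k + 1) - 1/2 = real k + 1/2" "real (Suc k) + 1/2 = (real k + 1) + 1/2"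
      by simp_all
    ultimately show "s k \<le> s (Suc k)" unfolding s_def harm_Suc_real by simp
  qed
  moreover have "s \<longlonglongrightarrow> 0"
  proof -
    have "(\<lambda>k. harm k - ln (real k + 1/2) - euler_mascheroni - (1/24) / (real k + 1/2)^2)
            \<longlonglongrightarrow> euler_mascheroni - euler_mascheroni - 0"
      by (intro tendsto_diff harm_minus_ln_half_tendsto_euler_mascheroni tendsto_const) real_asymp
    then show ?thesis by (simp add: s_def algebra_simps)
  qed
  ultimately show ?thesis using incseq_le[of s 0 k] by (simp add: s_def)
qed

lemma harm_minus_euler_mascheroni_lower:
  "(1/24) / (real k + 1)^2 \<le> harm k - euler_mascheroni - ln (real k + 1/2)"
proof -
  define s where "s = (\<lambda>k. harm k - euler_mascheroni - ln (real k + 1/2) - (1/24) / (real k + 1)^2 :: real)"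
  have "decseq s"
  proof (rule decseq_SucI)
    fix k
    have "(1/24) / (real k + 1)^2 - (1/24) / ((real k + 1) + 1)^2
       \<le> ln ((real k + 1) + 1/2) - ln ((real k + 1) - 1/2) - 1 / (real k + 1)"
      by (rule ln_midpoint_step_lower) simp
    moreover have "(real k + 1) - 1/2 = real k + 1/2" "real (Suc k) + 1/2 = (real k + 1) + 1/2"
      "real (Suc k) + 1 = (real k + 1) + 1" by simp_all
    ultimately show "s (Suc k) \<le> s k" unfolding s_def harm_Suc_real by simp
  qed
  moreover have "s \<longlonglongrightarrow> 0"
  proof -
    have "(\<lambda>k. harm k - ln (real k + 1/2) - euler_mascheroni - (1/24) / (real k + 1)^2)
            \<longlonglongrightarrow> euler_mascheroni - euler_mascheroni - 0"
      by (intro tendsto_diff harm_minus_ln_half_tendsto_euler_mascheroni tendsto_const) real_asymp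
    then show ?thesis by (simp add: s_def algebra_simps)
  qed
  ultimately show ?thesis using decseq_ge[of s 0 k] by (simp add: s_def)
qed

lemma ln_half_step_lower:
  fixes x :: real
  assumes "x \<ge> 0"
  shows "(1/24) / (x + 1/2)^2 \<le> ln (x + 1) - ln (x + 1/2)"
proof -
  have "ln ((x + 1/2) / (x + 1)) \<le> (x + 1/2) / (x + 1) - 1"
    using assms by (intro ln_le_minus_one) auto
  also have "\<dots> = - (1 / (2 * (x + 1)))" using assms by (simp add: field_simps)
  finally have "1 / (2 * (x + 1)) \<le> ln (x + 1) - ln (x + 1/2)" using assms by (simp add: ln_div)
  moreover have "1 / (24 * (x + 1/2)^2) \<le> 1 / (2 * (x + 1))"
  proof (rule divide_left_mono)
    show "2 * (x + 1) \<le> 24 * (x + 1/2)^2"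
      using assms by (simp add: power2_eq_square algebra_simps)
  qed (use assms in \<open>auto intro!: mult_pos_pos\<close>)
  ultimately show ?thesis by simp
qed

section \<open>The logarithmic integral\<close>

text \<open>\<open>1 / ln u\<close> without its pole at \<open>u = 1\<close>; it is continuous on \<open>[0, \<infinity>)\<close>, which turns
  the principal value defining \<open>li\<close> into an ordinary integral.\<close>

definition li_regular :: "real \<Rightarrow> real" where
  "li_regular u = (if u = 1 then 1/2 else 1 / ln u - 1 / (u - 1))"

lemma isCont_li_regular:
  assumes "x > 0"
  shows "isCont li_regular x"
proof -
  have eq: "\<forall>\<^sub>F u in at x. li_regular u = 1 / ln u - 1 / (u - 1)"
    using eventually_neq_at_within[of 1 x UNIV] by eventually_elim (simp add: li_regular_def)
  show ?thesis
  proof (cases "x = 1")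
    case True
    have "((\<lambda>u. 1 / ln u - 1 / (u - 1)) \<longlongrightarrow> 1/2) (at (1::real))" by real_asymp
    then show ?thesis using True tendsto_cong[OF eq] by (simp add: isCont_def li_regular_def[of 1])
  next
    case False
    then have "ln x \<noteq> 0" using assms by simp
    then have "((\<lambda>u. 1 / ln u - 1 / (u - 1)) \<longlongrightarrow> 1 / ln x - 1 / (x - 1)) (at x)"
      using assms False by (intro tendsto_intros) auto
    then show ?thesis using False tendsto_cong[OF eq] by (simp add: isCont_def li_regular_def[of x])
  qed
qed

lemma continuous_on_li_regular:
  assumes "b > 0"
  shows "continuous_on {0..b} li_regular"
proof (rule continuous_on_IccI)
  have "\<forall>\<^sub>F u in at_right 0. li_regular u = 1 / ln u - 1 / (u - 1)"
    using eventually_at_right_real[OF zero_less_one] by eventually_elim (auto simp: li_regular_def)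
  moreover have "((\<lambda>u. 1 / ln u - 1 / (u - 1)) \<longlongrightarrow> 1) (at_right (0::real))" by real_asymp
  ultimately show "(li_regular \<longlongrightarrow> li_regular 0) (at_right 0)"
    by (simp add: tendsto_cong li_regular_def)
  show "(li_regular \<longlongrightarrow> li_regular b) (at_left b)"
    using isCont_li_regular[OF assms] by (simp add: isCont_def filterlim_at_split)
  show "(li_regular \<longlongrightarrow> li_regular x) (at x)" if "0 < x" for x
    using isCont_li_regular[OF that] by (simp add: isCont_def)
qed (use assms in auto)

lemma integrable_li_regular: "0 \<le> a \<Longrightarrow> li_regular integrable_on {a..b}"
  by (intro integrable_continuous_real continuous_on_subset[OF continuous_on_li_regular[of "max b 1"]])
     auto

text \<open>Also for \<open>x < 1\<close>, since \<open>ln (- x) = ln x\<close> in Isabelle.\<close>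

lemma has_real_derivative_ln_minus_1:
  assumes "x \<noteq> 1"
  shows "((\<lambda>u. ln (u - 1)) has_real_derivative 1 / (x - 1)) (at x)"
proof (cases "x > 1")
  case False
  with assms have x: "1 - x > 0" by simp
  have eq: "(\<lambda>u. ln (u - 1)) = (\<lambda>u::real. ln (1 - u))"
  proof (rule ext)
    fix u :: real
    have "ln (- (1 - u)) = ln (1 - u)" by (rule ln_minus)
    then show "ln (u - 1) = ln (1 - u)" by simp
  qed
  have "((\<lambda>u. 1 - u) has_real_derivative 0 - 1) (at x)"
    by (intro derivative_intros)
  from DERIV_chain2[OF DERIV_ln_divide[OF x] this]
  have "((\<lambda>u. ln (1 - u)) has_real_derivative 1 / (1 - x) * (0 - 1)) (at x)" .
  then show ?thesis unfolding eq by (rule DERIV_cong) (use x in \<open>simp add: field_simps\<close>)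
qed (rule derivative_eq_intros refl | simp)+

lemma has_integral_inv_ln:
  assumes "0 \<le> a" "a \<le> b" "1 \<notin> {a..b}"
  shows "((\<lambda>u. 1 / ln u) has_integral integral {a..b} li_regular + (ln (b - 1) - ln (a - 1))) {a..b}"
proof -
  have "((\<lambda>u. 1 / (u - 1)) has_integral ln (b - 1) - ln (a - 1)) {a..b}"
    using assms
    by (intro fundamental_theorem_of_calculus)
       (auto intro!: has_field_derivative_at_within has_real_derivative_ln_minus_1
             simp flip: has_real_derivative_iff_has_vector_derivative)
  from has_integral_add[OF integrable_integral[OF integrable_li_regular[OF assms(1)]] this]
  have "((\<lambda>u. li_regular u + 1 / (u - 1)) has_integral
          integral {a..b} li_regular + (ln (b - 1) - ln (a - 1))) {a..b}" .
  moreover have "li_regular u + 1 / (u - 1) = 1 / ln u" if "u \<in> {a..b}" for u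
    using that assms by (auto simp: li_regular_def)
  ultimately show ?thesis
    using has_integral_cong[of "{a..b}" "\<lambda>u. li_regular u + 1 / (u - 1)" "\<lambda>u. 1 / ln u"] by simp
qed

lemma li_eq_integral_li_regular:
  assumes x: "x > 1"
  shows "li x = integral {0..x} li_regular + ln (x - 1)"
proof -
  define Q where "Q = (\<lambda>y. integral {0..y} li_regular)"
  have "continuous_on {0..x} Q"
    unfolding Q_def by (rule indefinite_integral_continuous_1[OF integrable_li_regular]) simp
  then have cont: "isCont Q 1"
    using x by (intro continuous_on_interior[of "{0..x}"]) auto
  have pv: "Q (1 - e) + (Q x - Q (1 + e)) + ln (x - 1)
              = integral {0..1 - e} (\<lambda>u. 1 / ln u) + integral {1 + e..x} (\<lambda>u. 1 / ln u)"
    if "e \<in> {0<..<min 1 (x - 1)}" for e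
  proof -
    have "Q (1 + e) + integral {1 + e..x} li_regular = Q x"
      unfolding Q_def
      by (rule Henstock_Kurzweil_Integration.integral_combine) (use that integrable_li_regular in auto)
    moreover have "ln (1 - e - 1) = ln e" "ln (0 - 1) = (0::real)"
      using ln_minus[of e] ln_minus[of 1] by simp_all
    ultimately show ?thesis
      using integral_unique[OF has_integral_inv_ln[of 0 "1 - e"]]
        integral_unique[OF has_integral_inv_ln[of "1 + e" x]] that
      by (simp add: Q_def)
  qed
  have "((\<lambda>e. Q (1 - e) + (Q x - Q (1 + e)) + ln (x - 1)) \<longlongrightarrow> Q 1 + (Q x - Q 1) + ln (x - 1))
          (at_right 0)"
    by (intro tendsto_intros isCont_tendsto_compose[OF cont]) real_asymp+
  then have "((\<lambda>e. integral {0..1 - e} (\<lambda>u. 1 / ln u) + integral {1 + e..x} (\<lambda>u. 1 / ln u))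
               \<longlongrightarrow> Q 1 + (Q x - Q 1) + ln (x - 1)) (at_right 0)"
    by (rule Lim_transform_eventually)
       (use eventually_at_right_real[of 0 "min 1 (x - 1)"] x pv in \<open>auto elim: eventually_mono\<close>)
  then show ?thesis unfolding li_def Q_def by (intro tendsto_Lim) simp_all
qed

lemma has_real_derivative_li:
  assumes x: "x > 1"
  shows "(li has_real_derivative 1 / ln x) (at x)"
proof (rule has_field_derivative_transform_within_open[where S = "{1<..}"])
  have "((\<lambda>y. integral {0..y} li_regular) has_real_derivative li_regular x) (at x within {0..x + 1})"
    using x by (intro integral_has_real_derivative continuous_on_li_regular) auto
  moreover have "at x within {0..x + 1} = at x" using x by (intro at_within_Icc_at) auto
  ultimately have "((\<lambda>y. integral {0..y} li_regular + ln (y - 1)) has_real_derivative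
                     li_regular x + 1 / (x - 1)) (at x)"
    using x by (auto intro!: derivative_eq_intros)
  then show "((\<lambda>y. integral {0..y} li_regular + ln (y - 1)) has_real_derivative 1 / ln x) (at x)"
    using x by (simp add: li_regular_def)
qed (use x li_eq_integral_li_regular in auto)

section \<open>The functions \<open>1 / (x^p (t + ln x)^q)\<close>\<close>

lemma exp_minus_less_imp_pos:
  fixes t x :: real
  assumes "exp (- t) < x"
  shows "0 < x" and "0 < t + ln x"
proof -
  show x: "0 < x" using assms exp_gt_zero[of "- t"] by linarith
  have "ln (exp (- t)) < ln x" using assms x by (subst ln_less_cancel_iff) auto
  then show "0 < t + ln x" by simp
qed

definition inv_pow_ln :: "real \<Rightarrow> nat \<Rightarrow> nat \<Rightarrow> real \<Rightarrow> real" where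
  "inv_pow_ln t p q x = 1 / (x ^ p * (t + ln x) ^ q)"

lemma has_real_derivative_inv_pow_ln:
  assumes "exp (- t) < x"
  shows "(inv_pow_ln t p q has_real_derivative
            - (p * inv_pow_ln t (p + 1) q x + q * inv_pow_ln t (p + 1) (q + 1) x)) (at x)"
proof -
  note pos = exp_minus_less_imp_pos[OF assms]
  have field: "1 / (x ^ p * L ^ q) * - (p / x + q * (1 / x / L))
      = - (p * (1 / (x ^ (p + 1) * L ^ q)) + q * (1 / (x ^ (p + 1) * L ^ (q + 1))))" if "L > 0" for L
    using pos that by (simp add: field_simps)
  have exp_form: "inv_pow_ln t p q y = exp (- (p * ln y + q * ln (t + ln y)))"
    if "y \<in> {exp (- t)<..}" for y
    using exp_minus_less_imp_pos[of t y] that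
    by (simp add: inv_pow_ln_def exp_minus exp_add exp_of_nat_mult exp_diff divide_inverse)
  have "((\<lambda>y. exp (- (p * ln y + q * ln (t + ln y)))) has_real_derivative
          exp (- (p * ln x + q * ln (t + ln x))) * - (p / x + q * (1 / x / (t + ln x)))) (at x)"
    using pos by (auto intro!: derivative_eq_intros)
  moreover have "exp (- (p * ln x + q * ln (t + ln x))) * - (p / x + q * (1 / x / (t + ln x)))
      = - (p * inv_pow_ln t (p + 1) q x + q * inv_pow_ln t (p + 1) (q + 1) x)"
    unfolding exp_form[of x, symmetric, OF assms[folded greaterThan_iff]] inv_pow_ln_def
    using field[OF pos(2)] .
  ultimately have "((\<lambda>y. exp (- (p * ln y + q * ln (t + ln y)))) has_real_derivative
      - (p * inv_pow_ln t (p + 1) q x + q * inv_pow_ln t (p + 1) (q + 1) x)) (at x)"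
    by simp
  then show ?thesis
    by (rule has_field_derivative_transform_within_open[where S = "{exp (- t)<..}"])
       (simp_all add: assms exp_form)
qed

lemma inv_pow_ln_pos: "exp (- t) < x \<Longrightarrow> 0 < inv_pow_ln t p q x"
  using exp_minus_less_imp_pos[of t x] by (simp add: inv_pow_ln_def)

lemma inv_pow_ln_antimono:
  assumes "exp (- t) < x" "x \<le> y"
  shows "inv_pow_ln t p q y \<le> inv_pow_ln t p q x"
proof -
  note px = exp_minus_less_imp_pos[OF assms(1)]
  have py: "0 < y" "0 < t + ln y" using exp_minus_less_imp_pos[of t y] assms by auto
  have "x ^ p * (t + ln x) ^ q \<le> y ^ p * (t + ln y) ^ q"
    using px assms(2) by (intro mult_mono power_mono) auto
  then show ?thesis unfolding inv_pow_ln_def using px py by (intro divide_left_mono) auto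
qed

lemma differentiable_inv_pow_ln: "exp (- t) < x \<Longrightarrow> inv_pow_ln t p q differentiable (at x)"
  using has_real_derivative_inv_pow_ln real_differentiable_def by blast

lemma integrable_inv_pow_ln: "exp (- t) < a \<Longrightarrow> inv_pow_ln t p q integrable_on {a..b}"
  by (rule integrable_on_if_has_real_derivative, rule has_real_derivative_inv_pow_ln) auto

lemma convex_on_inv_pow_ln: "convex_on {exp (- t)<..} (inv_pow_ln t p q)"
proof -
  define D where "D = (\<lambda>p q x. - (p * inv_pow_ln t (p + 1) q x + q * inv_pow_ln t (p + 1) (q + 1) x))"
  have D: "(inv_pow_ln t p q has_real_derivative D p q x) (at x)" if "exp (- t) < x" for p q x
    unfolding D_def by (rule has_real_derivative_inv_pow_ln[OF that])
  have D_nonpos: "D p q x \<le> 0" if "exp (- t) < x" for p q x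
  proof -
    have "0 \<le> p * inv_pow_ln t (p + 1) q x" "0 \<le> q * inv_pow_ln t (p + 1) (q + 1) x"
      using inv_pow_ln_pos[OF that] by (simp_all add: less_imp_le)
    then show ?thesis by (simp add: D_def)
  qed
  have "(D p q has_real_derivative - (p * D (p + 1) q x + q * D (p + 1) (q + 1) x)) (at x)"
    if "exp (- t) < x" for x
    using that D unfolding D_def by (auto intro!: derivative_eq_intros)
  then show ?thesis
    by (intro f''_ge0_imp_convex[OF convex_real_interval(3) D])
       (auto intro!: add_nonpos_nonpos mult_nonneg_nonpos D_nonpos simp flip: minus_add_distrib)
qed

definition inv_ln_deriv2 :: "real \<Rightarrow> real \<Rightarrow> real" where
  "inv_ln_deriv2 t x = inv_pow_ln t 2 2 x + 2 * inv_pow_ln t 2 3 x"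

lemma has_real_derivative_inv_ln:
  "exp (- t) < x \<Longrightarrow> ((\<lambda>x. 1 / (t + ln x)) has_real_derivative - inv_pow_ln t 1 2 x) (at x)"
proof -
  have "inv_pow_ln t 0 1 = (\<lambda>x. 1 / (t + ln x))" by (simp add: fun_eq_iff inv_pow_ln_def)
  then show "exp (- t) < x \<Longrightarrow> ?thesis"
    using has_real_derivative_inv_pow_ln[of t x 0 1] by (simp add: numeral_eq_Suc)
qed

lemma has_real_derivative_inv_pow_ln_1_2:
  "exp (- t) < x \<Longrightarrow> (inv_pow_ln t 1 2 has_real_derivative - inv_ln_deriv2 t x) (at x)"
  using has_real_derivative_inv_pow_ln[of t x 1 2] by (simp add: inv_ln_deriv2_def numeral_eq_Suc)

lemma inv_ln_deriv2_nonneg: "exp (- t) < x \<Longrightarrow> 0 \<le> inv_ln_deriv2 t x"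
  unfolding inv_ln_deriv2_def using inv_pow_ln_pos[of t x] by (simp add: add_nonneg_nonneg less_imp_le)

lemma inv_ln_deriv2_antimono:
  "exp (- t) < x \<Longrightarrow> x \<le> y \<Longrightarrow> inv_ln_deriv2 t y \<le> inv_ln_deriv2 t x"
  unfolding inv_ln_deriv2_def by (intro add_mono mult_left_mono inv_pow_ln_antimono) auto

lemma integral_inv_ln_unit_interval_bounds:
  assumes k: "exp (- t) < k"
  shows "1 / (t + ln (k + 1/2)) + inv_ln_deriv2 t (k + 1) / 24 \<le> integral {k..k + 1} (\<lambda>x. 1 / (t + ln x))"
    and "integral {k..k + 1} (\<lambda>x. 1 / (t + ln x)) \<le> 1 / (t + ln (k + 1/2)) + inv_ln_deriv2 t k / 24"
proof -
  have dom: "exp (- t) < x" if "x \<in> {k..k + 1}" for x using that k by auto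
  have mid: "(k + (k + 1)) / 2 = k + 1/2" by simp
  note f' = has_real_derivative_inv_ln[OF dom]
  have f'': "((\<lambda>x. - inv_pow_ln t 1 2 x) has_real_derivative inv_ln_deriv2 t x) (at x)"
    if "x \<in> {k..k + 1}" for x
    using DERIV_minus[OF has_real_derivative_inv_pow_ln_1_2[OF dom[OF that]]] by simp
  show "1 / (t + ln (k + 1/2)) + inv_ln_deriv2 t (k + 1) / 24 \<le> integral {k..k + 1} (\<lambda>x. 1 / (t + ln x))"
  proof -
    have "(k + 1 - k) * (1 / (t + ln ((k + (k + 1)) / 2))) + inv_ln_deriv2 t (k + 1) * (k + 1 - k)^3 / 24
        \<le> integral {k..k + 1} (\<lambda>x. 1 / (t + ln x))"
      by (rule midpoint_rule_lower_bound[OF _ f' f'']) (use inv_ln_deriv2_antimono dom in auto)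
    then show ?thesis unfolding mid by simp
  qed
  show "integral {k..k + 1} (\<lambda>x. 1 / (t + ln x)) \<le> 1 / (t + ln (k + 1/2)) + inv_ln_deriv2 t k / 24"
  proof -
    have "integral {k..k + 1} (\<lambda>x. 1 / (t + ln x))
        \<le> (k + 1 - k) * (1 / (t + ln ((k + (k + 1)) / 2))) + inv_ln_deriv2 t k * (k + 1 - k)^3 / 24"
      by (rule midpoint_rule_upper_bound[OF _ f' f'']) (use inv_ln_deriv2_antimono k in auto)
    then show ?thesis unfolding mid by simp
  qed
qed

lemma has_integral_inv_ln_deriv2:
  assumes "exp (- t) < a" "a \<le> b"
  shows "(inv_ln_deriv2 t has_integral inv_pow_ln t 1 2 a - inv_pow_ln t 1 2 b) {a..b}"
proof -
  have "((\<lambda>x. - inv_pow_ln t 1 2 x) has_real_derivative inv_ln_deriv2 t x) (at x)" if "x \<in> {a..b}" for x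
    using DERIV_minus[OF has_real_derivative_inv_pow_ln_1_2, of t x] that assms by simp
  then show ?thesis
    using fundamental_theorem_of_calculus[OF assms(2), of "\<lambda>x. - inv_pow_ln t 1 2 x"]
    by (simp add: has_real_derivative_iff_has_vector_derivative[symmetric] has_field_derivative_at_within)
qed

lemma has_integral_inv_ln_deriv2_atLeast:
  assumes a: "exp (- t) < a"
  shows "(inv_ln_deriv2 t has_integral inv_pow_ln t 1 2 a) {a..}"
proof (rule has_integral_to_inf)
  show "inv_ln_deriv2 t integrable_on {a..y}" for y
    by (cases "a \<le> y") (use has_integral_inv_ln_deriv2[OF a] in auto)
  have "\<forall>\<^sub>F y in at_top. integral {a..y} (inv_ln_deriv2 t) = inv_pow_ln t 1 2 a - inv_pow_ln t 1 2 y"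
    using eventually_ge_at_top[of a] by eventually_elim (use has_integral_inv_ln_deriv2[OF a] in blast)
  moreover have "((\<lambda>y. inv_pow_ln t 1 2 a - inv_pow_ln t 1 2 y) \<longlongrightarrow> inv_pow_ln t 1 2 a) at_top"
    unfolding inv_pow_ln_def by real_asymp
  ultimately show "((\<lambda>y. integral {a..y} (inv_ln_deriv2 t)) \<longlongrightarrow> inv_pow_ln t 1 2 a) at_top"
    by (simp add: tendsto_cong)
  show "inv_ln_deriv2 t y \<ge> 0" if "y \<ge> a" for y
    using that a by (intro inv_ln_deriv2_nonneg) auto
qed

lemma integrable_inv_pow_ln_2_2_atLeast:
  assumes a: "exp (- t) < a"
  shows "inv_pow_ln t 2 2 integrable_on {a..}"
proof (rule measurable_bounded_by_integrable_imp_integrable)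
  have "continuous_on {a..} (inv_pow_ln t 2 2)"
    by (rule continuous_at_imp_continuous_on)
       (use a in \<open>auto intro!: DERIV_isCont has_real_derivative_inv_pow_ln\<close>)
  then show "inv_pow_ln t 2 2 \<in> borel_measurable (lebesgue_on {a..})"
    by (rule continuous_imp_measurable_on_sets_lebesgue) simp
  show "inv_ln_deriv2 t integrable_on {a..}"
    using has_integral_inv_ln_deriv2_atLeast[OF a] by blast
  show "norm (inv_pow_ln t 2 2 x) \<le> inv_ln_deriv2 t x" if "x \<in> {a..}" for x
    using that a inv_pow_ln_pos[of t x] by (simp add: inv_ln_deriv2_def less_imp_le)
qed simp

lemma integral_inv_pow_ln_2_2_atLeast_bounds:
  assumes a: "exp (- t) < a"
  shows "integral {a..} (inv_pow_ln t 2 2) \<le> inv_pow_ln t 1 2 a"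
    and "inv_pow_ln t 1 2 a \<le> (1 + 2 / (t + ln a)) * integral {a..} (inv_pow_ln t 2 2)"
proof -
  note d_int = has_integral_inv_ln_deriv2_atLeast[OF a]
  note int = integrable_inv_pow_ln_2_2_atLeast[OF a]
  have La: "0 < t + ln a" using exp_minus_less_imp_pos[OF a] by simp
  have le: "inv_pow_ln t 2 2 x \<le> inv_ln_deriv2 t x" if "x \<in> {a..}" for x
    using that a inv_pow_ln_pos[of t x] by (simp add: inv_ln_deriv2_def less_imp_le)
  show "integral {a..} (inv_pow_ln t 2 2) \<le> inv_pow_ln t 1 2 a"
    using has_integral_le[OF integrable_integral[OF int] d_int le] .
  have "inv_ln_deriv2 t x \<le> (1 + 2 / (t + ln a)) * inv_pow_ln t 2 2 x" if "x \<in> {a..}" for x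
  proof -
    have x: "exp (- t) < x" and Lx: "t + ln a \<le> t + ln x"
      using that a exp_minus_less_imp_pos[OF a] by auto
    have "inv_pow_ln t 2 3 x = inv_pow_ln t 2 2 x / (t + ln x)"
      by (simp add: inv_pow_ln_def power_Suc2[where n = 2, simplified])
    also have "\<dots> \<le> inv_pow_ln t 2 2 x / (t + ln a)"
      using La Lx inv_pow_ln_pos[OF x, of 2 2] by (intro divide_left_mono) auto
    finally show ?thesis by (simp add: inv_ln_deriv2_def algebra_simps)
  qed
  from has_integral_le[OF d_int has_integral_mult_right[OF integrable_integral[OF int]] this]
  show "inv_pow_ln t 1 2 a \<le> (1 + 2 / (t + ln a)) * integral {a..} (inv_pow_ln t 2 2)" .
qed

lemma sum_inv_ln_deriv2_le:
  assumes a: "exp (- t) < a"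
  shows "(\<Sum>i<j. inv_ln_deriv2 t (a + real i)) \<le> inv_ln_deriv2 t a + inv_pow_ln t 1 2 (a + 1/2)"
proof (cases j)
  case (Suc m)
  have a': "exp (- t) < a + 1/2" using a by simp
  have "(\<Sum>i<m. inv_ln_deriv2 t ((a + 1/2) + real i + 1/2)) \<le> integral {a + 1/2..a + 1/2 + real m} (inv_ln_deriv2 t)"
  proof (rule sum_midpoints_le_integral_convex)
    show "convex_on {a + 1/2..a + 1/2 + real m} (inv_ln_deriv2 t)"
      unfolding inv_ln_deriv2_def
      by (intro convex_on_add convex_on_cmul convex_on_subset[OF convex_on_inv_pow_ln]) (use a in auto)
    show "inv_ln_deriv2 t differentiable (at x)" if "x \<in> {a + 1/2..a + 1/2 + real m}" for x
      unfolding inv_ln_deriv2_def using that a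
      by (intro differentiable_add differentiable_mult differentiable_const differentiable_inv_pow_ln) auto
  qed
  also have "\<dots> \<le> inv_pow_ln t 1 2 (a + 1/2)"
    using integral_unique[OF has_integral_inv_ln_deriv2[OF a', of "a + 1/2 + real m"]]
      inv_pow_ln_pos[of t "a + 1/2 + real m" 1 2] a by simp
  finally show ?thesis
    unfolding Suc sum.lessThan_Suc_shift by (simp add: algebra_simps)
qed (use a in \<open>simp add: add_nonneg_nonneg inv_ln_deriv2_nonneg less_imp_le[OF inv_pow_ln_pos]\<close>)

section \<open>The increments of \<open>beta_x\<close>\<close>

lemma has_real_derivative_li_scaled:
  assumes "exp (- t) < y"
  shows "((\<lambda>y. li (exp t * y) / exp t) has_real_derivative 1 / (t + ln y)) (at y)"
proof -
  note pos = exp_minus_less_imp_pos[OF assms]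
  have ln_eq: "ln (exp t * y) = t + ln y" using pos by (simp add: ln_mult)
  then have "1 < exp t * y" using pos by (subst ln_gt_zero_iff[symmetric]) auto
  from DERIV_chain2[OF has_real_derivative_li[OF this] DERIV_cmult[OF DERIV_ident, of "exp t"]]
  have "((\<lambda>y. li (exp t * y)) has_real_derivative exp t / (t + ln y)) (at y)"
    by (simp add: ln_eq)
  from DERIV_cdivide[OF this, of "exp t"] show ?thesis by simp
qed

definition beta_step :: "real \<Rightarrow> nat \<Rightarrow> real" where
  "beta_step t k = integral {real k..real k + 1} (\<lambda>x. 1 / (t + ln x)) - 1 / (harm k - euler_mascheroni + t)"

lemma beta_x_of_nat:
  assumes "r > 0"
  shows "beta_x (real N) t r = li (exp t * real N) / exp t
           - (\<Sum>k\<in>{nat \<lceil>r\<rceil>..<N}. 1 / (harm k - euler_mascheroni + t))"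
proof -
  have "{k::int. r \<le> real_of_int k \<and> real_of_int k < real N} = int ` {nat \<lceil>r\<rceil>..<N}"
  proof (intro set_eqI iffI)
    fix k :: int assume "k \<in> {k. r \<le> real_of_int k \<and> real_of_int k < real N}"
    then have "\<lceil>r\<rceil> \<le> k" "k < int N" "0 < k" using assms by (auto simp: ceiling_le_iff)
    then show "k \<in> int ` {nat \<lceil>r\<rceil>..<N}" by (intro image_eqI[of _ _ "nat k"]) (auto simp: ceiling_le_iff)
  qed (use assms in \<open>auto simp: ceiling_le_iff\<close>)
  then show ?thesis unfolding beta_x_def by (simp add: sum.reindex)
qed

lemma beta_x_add:
  assumes r: "exp (- t) < r" and n: "\<lceil>r\<rceil> \<le> int n"
  shows "beta_x (real (n + j)) t r = beta_x (real n) t r + (\<Sum>i<j. beta_step t (n + i))"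
proof (induction j)
  case (Suc j)
  have r0: "r > 0" using r exp_gt_zero[of "- t"] by linarith
  have "exp (- t) < real (n + j)" using r n by (simp add: ceiling_le_iff)
  then have ftc: "li (exp t * (real (n + j) + 1)) / exp t - li (exp t * real (n + j)) / exp t
      = integral {real (n + j)..real (n + j) + 1} (\<lambda>x. 1 / (t + ln x))"
    by (intro integral_unique[symmetric] fundamental_theorem_of_calculus)
       (auto intro!: has_field_derivative_at_within has_real_derivative_li_scaled
             simp flip: has_real_derivative_iff_has_vector_derivative)
  have sum: "(\<Sum>k\<in>{nat \<lceil>r\<rceil>..<Suc (n + j)}. 1 / (harm k - euler_mascheroni + t))
      = (\<Sum>k\<in>{nat \<lceil>r\<rceil>..<n + j}. 1 / (harm k - euler_mascheroni + t))
        + 1 / (harm (n + j) - euler_mascheroni + t)"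
    by (rule sum.atLeastLessThan_Suc) (use n in linarith)
  have eq: "real (n + j) + 1 = real (n + Suc j)" by simp
  have "beta_x (real (n + Suc j)) t r = beta_x (real (n + j)) t r + beta_step t (n + j)"
    unfolding beta_x_of_nat[OF r0] beta_step_def eq using ftc[unfolded eq] sum by simp
  then show ?case using Suc.IH by simp
qed simp

lemma inv_ln_midpoint_minus_correction_bounds:
  assumes k: "exp (- t) < real k"
  shows "inv_pow_ln t 2 2 (real k + 1) / 24
           \<le> 1 / (t + ln (real k + 1/2)) - 1 / (harm k - euler_mascheroni + t)"
    and "1 / (t + ln (real k + 1/2)) - 1 / (harm k - euler_mascheroni + t)
           \<le> inv_pow_ln t 2 2 (real k + 1/2) / 24"
proof -
  define L where "L = t + ln (real k + 1/2)"
  define L1 where "L1 = t + ln (real k + 1)"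
  define e where "e = harm k - euler_mascheroni - ln (real k + 1/2)"
  have L: "L > 0" using exp_minus_less_imp_pos[of t "real k + 1/2"] k by (simp add: L_def)
  have e_upper: "e \<le> (1/24) / (real k + 1/2)^2"
    unfolding e_def by (rule harm_minus_euler_mascheroni_upper)
  have e_lower: "(1/24) / (real k + 1)^2 \<le> e"
    unfolding e_def by (rule harm_minus_euler_mascheroni_lower)
  moreover have "(1/24) / (real k + 1)^2 > 0" by simp
  ultimately have e: "e > 0" by linarith
  have L1: "L + e \<le> L1" using e_upper ln_half_step_lower[of "real k"] by (simp add: L_def L1_def)
  have corr: "harm k - euler_mascheroni + t = L + e" by (simp add: L_def e_def)
  have diff: "1 / (t + ln (real k + 1/2)) - 1 / (harm k - euler_mascheroni + t) = e / (L * (L + e))"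
    unfolding corr L_def[symmetric] using L e by (simp add: field_simps)
  have "inv_pow_ln t 2 2 (real k + 1) / 24 = ((1/24) / (real k + 1)^2) / L1^2"
    by (simp add: inv_pow_ln_def L1_def)
  also have "\<dots> \<le> e / L1^2" using e_lower by (intro divide_right_mono) auto
  also have "\<dots> \<le> e / (L * (L + e))"
    using L e L1 by (intro divide_left_mono) (auto simp: power2_eq_square intro!: mult_mono)
  finally show "inv_pow_ln t 2 2 (real k + 1) / 24
           \<le> 1 / (t + ln (real k + 1/2)) - 1 / (harm k - euler_mascheroni + t)"
    unfolding diff .
  have "e / (L * (L + e)) \<le> e / L^2"
    using L e by (intro divide_left_mono) (auto simp: power2_eq_square)
  also have "\<dots> \<le> ((1/24) / (real k + 1/2)^2) / L^2" using e_upper by (intro divide_right_mono) auto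
  also have "\<dots> = inv_pow_ln t 2 2 (real k + 1/2) / 24" by (simp add: inv_pow_ln_def L_def)
  finally show "1 / (t + ln (real k + 1/2)) - 1 / (harm k - euler_mascheroni + t)
           \<le> inv_pow_ln t 2 2 (real k + 1/2) / 24"
    unfolding diff .
qed

lemma beta_step_bounds:
  assumes "exp (- t) < real k"
  shows "inv_ln_deriv2 t (real k + 1) + inv_pow_ln t 2 2 (real k + 1) \<le> 24 * beta_step t k"
    and "24 * beta_step t k \<le> inv_ln_deriv2 t (real k) + inv_pow_ln t 2 2 (real k + 1/2)"
proof -
  note bounds = integral_inv_ln_unit_interval_bounds[OF assms]
    inv_ln_midpoint_minus_correction_bounds[OF assms]
  show "inv_ln_deriv2 t (real k + 1) + inv_pow_ln t 2 2 (real k + 1) \<le> 24 * beta_step t k"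
    using bounds unfolding beta_step_def by argo
  show "24 * beta_step t k \<le> inv_ln_deriv2 t (real k) + inv_pow_ln t 2 2 (real k + 1/2)"
    using bounds unfolding beta_step_def by argo
qed

lemma sum_beta_step_lower:
  assumes a: "exp (- t) < real n"
  shows "inv_pow_ln t 1 2 (real n + 1) - inv_pow_ln t 1 2 (real n + 1 + real j)
           + integral {real n + 1..real n + 1 + real j} (inv_pow_ln t 2 2)
         \<le> 24 * (\<Sum>i<j. beta_step t (n + i))"
proof -
  let ?g = "\<lambda>x. inv_ln_deriv2 t x + inv_pow_ln t 2 2 x"
  have a1: "exp (- t) < real n + 1" using a by simp
  have dom: "exp (- t) < real (n + i)" for i using a by simp
  have g_int: "(?g has_integral (inv_pow_ln t 1 2 (real n + 1) - inv_pow_ln t 1 2 (real n + 1 + real j)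
                 + integral {real n + 1..real n + 1 + real j} (inv_pow_ln t 2 2)))
               {real n + 1..real n + 1 + real j}"
    by (intro has_integral_add has_integral_inv_ln_deriv2 integrable_integral integrable_inv_pow_ln a1) simp
  have "integral {real n + 1..real n + 1 + real j} ?g \<le> (\<Sum>i<j. ?g (real n + 1 + real i))"
  proof (rule integral_le_sum_antimono)
    show "?g integrable_on {real n + 1..real n + 1 + real j}" using g_int by blast
    show "?g y \<le> ?g x" if "real n + 1 \<le> x" "x \<le> y" for x y
      using that a1 by (intro add_mono inv_ln_deriv2_antimono inv_pow_ln_antimono) auto
  qed
  also have "\<dots> \<le> (\<Sum>i<j. 24 * beta_step t (n + i))"
    by (intro sum_mono) (use beta_step_bounds(1)[OF dom] in \<open>simp add: algebra_simps\<close>)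
  finally show ?thesis using integral_unique[OF g_int] by (simp add: sum_distrib_left)
qed

lemma sum_beta_step_upper:
  assumes a: "exp (- t) < real n"
  shows "24 * (\<Sum>i<j. beta_step t (n + i))
         \<le> integral {real n..} (inv_pow_ln t 2 2) + inv_pow_ln t 1 2 (real n + 1/2) + inv_ln_deriv2 t (real n)"
proof -
  have dom: "exp (- t) < real (n + i)" for i using a by simp
  have "(\<Sum>i<j. 24 * beta_step t (n + i))
        \<le> (\<Sum>i<j. inv_ln_deriv2 t (real n + real i)) + (\<Sum>i<j. inv_pow_ln t 2 2 (real n + real i + 1/2))"
    unfolding sum.distrib[symmetric]
    by (intro sum_mono) (use beta_step_bounds(2)[OF dom] in \<open>simp add: algebra_simps\<close>)
  also have "(\<Sum>i<j. inv_ln_deriv2 t (real n + real i)) \<le> inv_ln_deriv2 t (real n) + inv_pow_ln t 1 2 (real n + 1/2)"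
    by (rule sum_inv_ln_deriv2_le[OF a])
  also have "(\<Sum>i<j. inv_pow_ln t 2 2 (real n + real i + 1/2)) \<le> integral {real n..real n + real j} (inv_pow_ln t 2 2)"
    using a by (intro sum_midpoints_le_integral_convex differentiable_inv_pow_ln
        convex_on_subset[OF convex_on_inv_pow_ln]) auto
  also have "\<dots> \<le> integral {real n..} (inv_pow_ln t 2 2)"
    using a by (intro integral_subset_le integrable_inv_pow_ln integrable_inv_pow_ln_2_2_atLeast)
      (auto intro!: less_imp_le[OF inv_pow_ln_pos])
  finally show ?thesis by (simp add: sum_distrib_left)
qed

lemma beta_minus_beta_x_sums:
  assumes r: "exp (- t) < r" and n: "\<lceil>r\<rceil> \<le> int n"
  shows "(\<lambda>i. beta_step t (n + i)) sums (beta t r - beta_x (real n) t r)"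
proof -
  have a: "exp (- t) < real n" using r n by (simp add: ceiling_le_iff)
  have nonneg: "0 \<le> beta_step t (n + i)" for i
  proof -
    have "exp (- t) < real (n + i)" using a by simp
    then show ?thesis
      using beta_step_bounds(1)[of t "n + i"] inv_ln_deriv2_nonneg[of t "real (n + i) + 1"]
        inv_pow_ln_pos[of t "real (n + i) + 1" 2 2] by simp
  qed
  have "summable (\<lambda>i. beta_step t (n + i))"
  proof (rule summableI_nonneg_bounded[OF nonneg])
    show "(\<Sum>i<j. beta_step t (n + i)) \<le> (integral {real n..} (inv_pow_ln t 2 2)
            + inv_pow_ln t 1 2 (real n + 1/2) + inv_ln_deriv2 t (real n)) / 24" for j
      using sum_beta_step_upper[OF a, of j] by simp
  qed
  then have "(\<lambda>j. beta_x (real (n + j)) t r) \<longlonglongrightarrow> beta_x (real n) t r + (\<Sum>i. beta_step t (n + i))"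
    unfolding beta_x_add[OF r n] by (intro tendsto_add tendsto_const summable_LIMSEQ)
  then have "(\<lambda>N. beta_x (real N) t r) \<longlonglongrightarrow> beta_x (real n) t r + (\<Sum>i. beta_step t (n + i))"
    by (subst (asm) add.commute) (rule LIMSEQ_offset)
  then have "beta t r = beta_x (real n) t r + (\<Sum>i. beta_step t (n + i))"
    unfolding beta_def by (rule limI)
  then show ?thesis using \<open>summable _\<close> by (simp add: summable_sums)
qed

lemma beta_minus_beta_x_bounds:
  assumes r: "exp (- t) < r" and n: "\<lceil>r\<rceil> \<le> int n"
  shows "inv_pow_ln t 1 2 (real n + 1) + integral {real n + 1..} (inv_pow_ln t 2 2)
           \<le> 24 * (beta t r - beta_x (real n) t r)"
    and "24 * (beta t r - beta_x (real n) t r)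
           \<le> integral {real n..} (inv_pow_ln t 2 2) + inv_pow_ln t 1 2 (real n + 1/2) + inv_ln_deriv2 t (real n)"
proof -
  have a: "exp (- t) < real n" using r n by (simp add: ceiling_le_iff)
  have a1: "exp (- t) < real n + 1" using a by simp
  have partial: "(\<lambda>j. 24 * (\<Sum>i<j. beta_step t (n + i))) \<longlonglongrightarrow> 24 * (beta t r - beta_x (real n) t r)"
    using beta_minus_beta_x_sums[OF r n] unfolding sums_def by (intro tendsto_mult_left)
  have "(\<lambda>j. inv_pow_ln t 1 2 (real n + 1) - inv_pow_ln t 1 2 (real n + 1 + real j)
           + integral {real n + 1..real n + 1 + real j} (inv_pow_ln t 2 2))
        \<longlonglongrightarrow> inv_pow_ln t 1 2 (real n + 1) - 0 + integral {real n + 1..} (inv_pow_ln t 2 2)"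
  proof (intro tendsto_intros integral_atLeastAtMost_tendsto_integral_atLeast
      integrable_inv_pow_ln_2_2_atLeast a1)
    show "(\<lambda>j. inv_pow_ln t 1 2 (real n + 1 + real j)) \<longlonglongrightarrow> 0"
      unfolding inv_pow_ln_def by real_asymp
  qed (use a1 in \<open>auto intro!: less_imp_le[OF inv_pow_ln_pos]\<close>)
  from LIMSEQ_le[OF this partial] sum_beta_step_lower[OF a]
  show "inv_pow_ln t 1 2 (real n + 1) + integral {real n + 1..} (inv_pow_ln t 2 2)
           \<le> 24 * (beta t r - beta_x (real n) t r)" by simp
  from LIMSEQ_le_const2[OF partial] sum_beta_step_upper[OF a]
  show "24 * (beta t r - beta_x (real n) t r)
           \<le> integral {real n..} (inv_pow_ln t 2 2) + inv_pow_ln t 1 2 (real n + 1/2) + inv_ln_deriv2 t (real n)"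
    by blast
qed

lemma beta_minus_beta_x_asymp_equiv:
  assumes r: "exp (- t) < r"
  shows "(\<lambda>n::nat. beta t r - beta_x (real n) t r) \<sim>[at_top] (\<lambda>n. 1 / (12 * real n * (ln (real n))^2))"
proof (rule asymp_equiv_sandwich_real)
  show "(\<lambda>n::nat. (inv_pow_ln t 1 2 (real n + 1)
          + inv_pow_ln t 1 2 (real n + 1) / (1 + 2 / (t + ln (real n + 1)))) / 24)
        \<sim>[at_top] (\<lambda>n. 1 / (12 * real n * (ln (real n))^2))"
    unfolding inv_pow_ln_def by real_asymp
  show "(\<lambda>n::nat. (inv_pow_ln t 1 2 (real n) + inv_pow_ln t 1 2 (real n + 1/2) + inv_ln_deriv2 t (real n)) / 24)
        \<sim>[at_top] (\<lambda>n. 1 / (12 * real n * (ln (real n))^2))"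
    unfolding inv_ln_deriv2_def inv_pow_ln_def by real_asymp
  show "\<forall>\<^sub>F n in at_top. beta t r - beta_x (real n) t r \<in>
          {(inv_pow_ln t 1 2 (real n + 1) + inv_pow_ln t 1 2 (real n + 1) / (1 + 2 / (t + ln (real n + 1)))) / 24
           ..(inv_pow_ln t 1 2 (real n) + inv_pow_ln t 1 2 (real n + 1/2) + inv_ln_deriv2 t (real n)) / 24}"
    using eventually_ge_at_top[of "nat \<lceil>r\<rceil>"]
  proof eventually_elim
    case (elim n)
    then have n: "\<lceil>r\<rceil> \<le> int n" by linarith
    have a: "exp (- t) < real n" and a1: "exp (- t) < real n + 1"
      using r n by (simp_all add: ceiling_le_iff)
    have "1 + 2 / (t + ln (real n + 1)) > 0"
      using exp_minus_less_imp_pos[OF a1] by (simp add: add_pos_pos)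
    then have "inv_pow_ln t 1 2 (real n + 1) / (1 + 2 / (t + ln (real n + 1)))
                 \<le> integral {real n + 1..} (inv_pow_ln t 2 2)"
      using integral_inv_pow_ln_2_2_atLeast_bounds(2)[OF a1] by (simp add: divide_le_eq mult.commute)
    then show ?case
      using beta_minus_beta_x_bounds[OF r n] integral_inv_pow_ln_2_2_atLeast_bounds(1)[OF a] by simp
  qed
qed

theorem corollary3p10:
  fixes t r :: real
  assumes "r > exp (- t)"
  shows "(\<forall>n::nat. ceiling r \<le> int n \<longrightarrow>
      integral {real n + 1..} (\<lambda>x. 1 / (24 * x^2 * (t + ln x)^2))
        + 1 / (24 * (real n + 1) * (t + ln (real n + 1))^2)
        \<le> beta t r - beta_x (real n) t r
    \<and> beta t r - beta_x (real n) t r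
        \<le> integral {real n..} (\<lambda>x. 1 / (24 * x^2 * (t + ln x)^2))
          + 1 / (24 * (real n + 1/2) * (t + ln (real n + 1/2))^2)
          + 1 / (24 * (real n)^2 * (t + ln (real n))^2)
          + 1 / (12 * (real n)^2 * (t + ln (real n))^3))
    \<and> (\<lambda>n::nat. beta t r - beta_x (real n) t r)
        \<sim>[at_top] (\<lambda>n. 1 / (12 * real n * (ln (real n))^2))"
proof (intro conjI allI impI)
  have G: "1 / (24 * x * (t + ln x)^2) = inv_pow_ln t 1 2 x / 24"
    and g: "1 / (24 * x^2 * (t + ln x)^2) = inv_pow_ln t 2 2 x / 24"
    and h: "1 / (12 * x^2 * (t + ln x)^3) = inv_pow_ln t 2 3 x / 12" for x :: real
    by (simp_all add: inv_pow_ln_def)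
  fix n :: nat assume "ceiling r \<le> int n"
  note bounds = beta_minus_beta_x_bounds[OF assms this]
  show "integral {real n + 1..} (\<lambda>x. 1 / (24 * x^2 * (t + ln x)^2))
        + 1 / (24 * (real n + 1) * (t + ln (real n + 1))^2) \<le> beta t r - beta_x (real n) t r"
    using bounds(1) unfolding G g by simp
  show "beta t r - beta_x (real n) t r
        \<le> integral {real n..} (\<lambda>x. 1 / (24 * x^2 * (t + ln x)^2))
          + 1 / (24 * (real n + 1/2) * (t + ln (real n + 1/2))^2)
          + 1 / (24 * (real n)^2 * (t + ln (real n))^2)
          + 1 / (12 * (real n)^2 * (t + ln (real n))^3)"
    using bounds(2) unfolding G g h by (simp add: inv_ln_deriv2_def)
next
  show "(\<lambda>n::nat. beta t r - beta_x (real n) t r) \<sim>[at_top] (\<lambda>n. 1 / (12 * real n * (ln (real n))^2))"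
    by (rule beta_minus_beta_x_asymp_equiv[OF assms])
qed

end
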